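(* Let $p,\tilde{p} \in [0,1]$ and let $\mathbf{x} = (x_1,x_2,u)$ and $\tilde{\mathbf{x}} = (\tilde{x}_1,\tilde{x}_2,\tilde{u})$ be arbitrary configurations of $n$ agents. Then for all $t \geq 0$: (1) if $\tilde{p} \leq p$, $\tilde{x}_1 \leq x_1$ and $\tilde{x}_2 \geq x_2$, then $\Pr[T_1(p,\mathbf{x}) \leq t] \geq \Pr[T_1(\tilde{p},\tilde{\mathbf{x}}) \leq t]$; (2) if $\tilde{p} \geq p$, $\tilde{x}_1 \geq x_1$ and $\tilde{x}_2 \leq x_2$, then $\Pr[T_2(p,\mathbf{x}) \leq t] \geq \Pr[T_2(\tilde{p},\tilde{\mathbf{x}}) \leq t]$.
   Context: Population protocol with $n$ agents, each in a state from $Q=\{1,2,\bot\}$ (Opinion 1, Opinion 2, undecided). At each time step a scheduler picks an ordered pair $(i,j)$ of agents uniformly at random, independently of the past; $i$ is the initiator and $j$ the responder, and only the initiator changes state. The stubborn undecided state dynamics $\mathrm{USD}_p$ with stubbornness $p\in[0,1]$ has transitions: if the initiator is in state $2$ and the responder in state $1$, the initiator becomes $\bot$; if the initiator is in state $1$ and the responder in state $2$, the initiator becomes $\bot$ with probability $1-p$ and stays $1$ with probability $p$; if the initiator is $\bot$, it adopts the responder's state; otherwise nothing changes. A configuration $(x_1,x_2,u)$ gives the numbers of agents in states $1$, $2$, $\bot$ (summing to $n$). $\mathrm{USD}_p(\mathbf{x})$ is the process started in $\mathbf{x}$, time measured in interactions, and $T_i(p,\mathbf{x})$ is the first time at which all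 $n$ agents have Opinion $i$ in $\mathrm{USD}_p(\mathbf{x})$ ($\infty$ if never). *)

theory Defs
  imports "HOL-Probability.Probability"
begin

datatype st = Op1 | Op2 | Und

text \<open>A configuration (x1, x2, u): numbers of agents in states 1, 2, undecided.\<close>
type_synonym config = "nat \<times> nat \<times> nat"

definition nagents :: "config \<Rightarrow> nat" where
  "nagents c = (case c of (x1, x2, u) \<Rightarrow> x1 + x2 + u)"

text \<open>A canonical labelling of the agents 0..n-1 realising the configuration
  (the dynamics only depends on the counts).\<close>
definition state_of :: "config \<Rightarrow> nat \<Rightarrow> st" where
  "state_of c k = (case c of (x1, x2, u) \<Rightarrow>
     if k < x1 then Op1 else if k < x1 + x2 then Op2 else Und)"

text \<open>New state of the initiator (in state a) after interacting with a
  responder in state b, for USD with stubbornness p.\<close>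
definition interact :: "real \<Rightarrow> st \<Rightarrow> st \<Rightarrow> st pmf" where
  "interact p a b =
     (if a = Op2 \<and> b = Op1 then return_pmf Und
      else if a = Op1 \<and> b = Op2 then map_pmf (\<lambda>keep. if keep then Op1 else Und) (bernoulli_pmf p)
      else if a = Und then return_pmf b
      else return_pmf a)"

definition cnt_add :: "config \<Rightarrow> st \<Rightarrow> int \<Rightarrow> config" where
  "cnt_add c s d = (case c of (x1, x2, u) \<Rightarrow>
     (case s of Op1 \<Rightarrow> (nat (int x1 + d), x2, u)
              | Op2 \<Rightarrow> (x1, nat (int x2 + d), u)
              | Und \<Rightarrow> (x1, x2, nat (int u + d))))"

definition move :: "config \<Rightarrow> st \<Rightarrow> st \<Rightarrow> config" where
  "move c a a' = cnt_add (cnt_add c a (-1)) a' 1"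

definition step :: "real \<Rightarrow> config \<Rightarrow> config pmf" where
  "step p c =
     (if nagents c < 2 then return_pmf c
      else do {
        (i, j) \<leftarrow> pmf_of_set {(i, j). i < nagents c \<and> j < nagents c \<and> i \<noteq> j};
        a' \<leftarrow> interact p (state_of c i) (state_of c j);
        return_pmf (move c (state_of c i) a')
      })"

fun traj :: "real \<Rightarrow> config \<Rightarrow> nat \<Rightarrow> config list pmf" where
  "traj p c 0 = return_pmf [c]"
| "traj p c (Suc t) = traj p c t \<bind> (\<lambda>xs. map_pmf (\<lambda>y. xs @ [y]) (step p (last xs)))"

definition consensus :: "nat \<Rightarrow> nat \<Rightarrow> config" where
  "consensus i n = (if i = 1 then (n, 0, 0) else (0, n, 0))"

definition prob_T_le :: "nat \<Rightarrow> real \<Rightarrow> config \<Rightarrow> nat \<Rightarrow> real" where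
  "prob_T_le i p c t =
     measure_pmf.prob (traj p c t) {xs. \<exists>k\<le>t. xs ! k = consensus i (nagents c)}"

end

theory Submission
  imports Defs
begin

text \<open>
  Conditioning on the first interaction, the probability of reaching consensus within
  t + 1 steps is 1 at the consensus and otherwise the expectation, after one step, of the
  probability of reaching it within t steps. Order configurations with n agents by
  c \<le> c' iff c' has at least as many agents of opinion 1 and at most as many of
  opinion 2. The one-step expectation operator of USD_p is monotone for this order: it
  preserves increasing functions, which suffices to check for the elementary moves
  \<bottom> \<rightarrow> 1 and 2 \<rightarrow> \<bottom>, where the difference of the explicit
  transition sums regroups into increments of the function with nonnegative coefficients;
  and on increasing functions it increases with the stubbornness p, since p only weights
  the outcome 1 against \<bottom>. By induction on t, Pr[T_1 \<le> t] is therefore increasing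
  and Pr[T_2 \<le> t] decreasing in (p, c).
\<close>

lemma measure_pmf_prob_bind:
  "measure_pmf.prob (bind_pmf M f) A = (\<integral>x. measure_pmf.prob (f x) A \<partial>M)"
  unfolding measure_pmf_bind
  by (rule measure_pmf.measure_bind[where N = "count_space UNIV"])
     (auto intro: measure_pmf_in_subprob_algebra)

lemma set_pmf_traj: "xs \<in> set_pmf (traj p c t) \<Longrightarrow> length xs = Suc t \<and> hd xs = c"
proof (induction t arbitrary: xs)
  case (Suc t)
  then obtain ys y where "ys \<in> set_pmf (traj p c t)" "xs = ys @ [y]" by auto
  with Suc.IH[of ys] show ?case by (cases ys) auto
qed simp

lemma traj_Suc_Cons: "traj p c (Suc t) = step p c \<bind> (\<lambda>y. map_pmf ((#) c) (traj p y t))"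
proof (induction t arbitrary: c)
  case 0
  show ?case by (simp add: map_pmf_def bind_return_pmf)
next
  case (Suc t)
  have extend: "map_pmf ((#) c) (traj p y t) \<bind> (\<lambda>xs. map_pmf (\<lambda>z. xs @ [z]) (step p (last xs)))
      = map_pmf ((#) c) (traj p y (Suc t))" for y
  proof -
    have "last (c # ys) = last ys" if "ys \<in> set_pmf (traj p y t)" for ys
      using set_pmf_traj[OF that] by (cases ys) auto
    then show ?thesis
      by (simp add: bind_map_pmf map_bind_pmf pmf.map_comp o_def cong: bind_pmf_cong)
  qed
  show ?case
    by (simp only: traj.simps(2)[of p c "Suc t"] Suc bind_assoc_pmf extend)
qed

text \<open>This is \<^const>\<open>prob_T_le\<close> with the number of agents n as a separate
  parameter, so that the first-step recursion can keep the target consensus fixed.\<close>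
definition hit_prob :: "nat \<Rightarrow> real \<Rightarrow> nat \<Rightarrow> config \<Rightarrow> nat \<Rightarrow> real" where
  "hit_prob i p n c t = measure_pmf.prob (traj p c t) {xs. \<exists>k\<le>t. xs ! k = consensus i n}"

lemma hit_prob_0: "hit_prob i p n c 0 = (if c = consensus i n then 1 else 0)"
  by (simp add: hit_prob_def)

lemma hit_prob_le_1: "hit_prob i p n c t \<le> 1"
  by (simp add: hit_prob_def)

lemma hit_prob_Suc: "hit_prob i p n c (Suc t) =
   (if c = consensus i n then 1 else \<integral>y. hit_prob i p n y t \<partial>step p c)"
proof -
  have "(\<exists>k\<le>Suc t. (c # ys) ! k = consensus i n) \<longleftrightarrow>
        c = consensus i n \<or> (\<exists>k\<le>t. ys ! k = consensus i n)" for ys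
    by (metis Suc_le_mono le0 nth_Cons_0 nth_Cons_Suc not0_implies_Suc)
  then show ?thesis
    by (simp add: hit_prob_def traj_Suc_Cons measure_pmf_prob_bind del: traj.simps)
qed

lemma hit_prob_consensus: "hit_prob i p n (consensus i n) t = 1"
  by (cases t) (simp_all add: hit_prob_0 hit_prob_Suc)

lemma move_simps:
  "move (a,b,u) Op1 Op1 = (a-1+1,b,u)" "move (a,b,u) Op1 Op2 = (a-1,b+1,u)"
  "move (a,b,u) Op1 Und = (a-1,b,u+1)" "move (a,b,u) Op2 Op1 = (a+1,b-1,u)"
  "move (a,b,u) Op2 Op2 = (a,b-1+1,u)" "move (a,b,u) Op2 Und = (a,b-1,u+1)"
  "move (a,b,u) Und Op1 = (a+1,b,u-1)" "move (a,b,u) Und Op2 = (a,b+1,u-1)"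
  "move (a,b,u) Und Und = (a,b,u-1+1)"
  by (auto simp: move_def cnt_add_def nat_diff_distrib' simp flip: of_nat_Suc)

lemma sum_state_of:
  fixes \<phi> :: "st \<Rightarrow> 'a::comm_semiring_1"
  shows "(\<Sum>k<a+b+u. \<phi> (state_of (a,b,u) k)) = of_nat a * \<phi> Op1 + of_nat b * \<phi> Op2 + of_nat u * \<phi> Und"
proof -
  have "(\<Sum>k<a+b+u. \<phi> (state_of (a,b,u) k)) = (\<Sum>k\<in>{0..<a}. \<phi> (state_of (a,b,u) k))
      + (\<Sum>k\<in>{a..<a+b}. \<phi> (state_of (a,b,u) k)) + (\<Sum>k\<in>{a+b..<a+b+u}. \<phi> (state_of (a,b,u) k))"
    by (simp add: sum.atLeastLessThan_concat lessThan_atLeast0)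
  also have "\<dots> = (\<Sum>k\<in>{0..<a}. \<phi> Op1) + (\<Sum>k\<in>{a..<a+b}. \<phi> Op2) + (\<Sum>k\<in>{a+b..<a+b+u}. \<phi> Und)"
    by (intro arg_cong2[where f = "(+)"] sum.cong) (auto simp: state_of_def)
  finally show ?thesis by (simp add: mult_of_nat_commute)
qed

lemma sum_off_diagonal:
  fixes F :: "nat \<times> nat \<Rightarrow> 'a::ab_group_add"
  shows "(\<Sum>x\<in>{(i, j). i < n \<and> j < n \<and> i \<noteq> j}. F x) = (\<Sum>i<n. (\<Sum>j<n. F (i,j)) - F (i,i))"
proof -
  have "{(i, j). i < n \<and> j < n \<and> i \<noteq> j} = Sigma {..<n} (\<lambda>i. {..<n} - {i})" by auto
  then have "(\<Sum>x\<in>{(i, j). i < n \<and> j < n \<and> i \<noteq> j}. F x) = (\<Sum>i<n. \<Sum>j\<in>{..<n} - {i}. F (i,j))"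
    by (simp add: sum.Sigma)
  then show ?thesis by (simp add: sum_diff1)
qed

lemma sum_agent_pairs:
  fixes a b u :: nat and F :: "st \<Rightarrow> st \<Rightarrow> real"
  defines "s \<equiv> state_of (a,b,u)"
  shows "(\<Sum>(i,j)\<in>{(i, j). i < a+b+u \<and> j < a+b+u \<and> i \<noteq> j}. F (s i) (s j))
   = real a * (real a - 1) * F Op1 Op1 + real a * real b * F Op1 Op2 + real a * real u * F Op1 Und
   + real b * real a * F Op2 Op1 + real b * (real b - 1) * F Op2 Op2 + real b * real u * F Op2 Und
   + real u * real a * F Und Op1 + real u * real b * F Und Op2 + real u * (real u - 1) * F Und Und"
proof -
  define G where "G x = real a * F x Op1 + real b * F x Op2 + real u * F x Und - F x x" for x
  have "(\<Sum>(i,j)\<in>{(i, j). i < a+b+u \<and> j < a+b+u \<and> i \<noteq> j}. F (s i) (s j)) = (\<Sum>i<a+b+u. G (s i))"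
    unfolding sum_off_diagonal G_def s_def by (simp add: sum_state_of[where \<phi> = "F _"])
  also have "\<dots> = real a * G Op1 + real b * G Op2 + real u * G Und"
    unfolding s_def by (rule sum_state_of)
  finally show ?thesis by (simp add: G_def algebra_simps)
qed

text \<open>n(n - 1) times the expected value of g after one interaction from (a, b, u): each
  ordered pair of states is weighted by the number of ordered pairs of distinct agents in
  those states.\<close>
fun trans_sum :: "real \<Rightarrow> (config \<Rightarrow> real) \<Rightarrow> config \<Rightarrow> real" where
  "trans_sum p g (a,b,u) =
     real a * (real a - 1) * g (a,b,u) + real a * real b * (p * g (a,b,u) + (1 - p) * g (a-1,b,u+1))
   + real a * real u * g (a,b,u) + real b * real a * g (a,b-1,u+1) + real b * (real b - 1) * g (a,b,u)
   + real b * real u * g (a,b,u) + real u * real a * g (a+1,b,u-1) + real u * real b * g (a,b+1,u-1)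
   + real u * (real u - 1) * g (a,b,u)"

lemma expectation_step:
  assumes n: "2 \<le> nagents c" and p: "0 \<le> p" "p \<le> 1"
  shows "(\<integral>y. g y \<partial>step p c) = trans_sum p g c / (real (nagents c) * (real (nagents c) - 1))"
proof -
  obtain a b u where c: "c = (a,b,u)" by (cases c)
  define s where "s = state_of c"
  define S where "S = {(i, j). i < nagents c \<and> j < nagents c \<and> i \<noteq> j}"
  have nc: "nagents c = a+b+u" by (simp add: c nagents_def)
  define h where "h x y = (\<integral>z. g z \<partial>map_pmf (move c x) (interact p x y))" for x y
  have step: "step p c = pmf_of_set S \<bind> (\<lambda>(i,j). map_pmf (move c (s i)) (interact p (s i) (s j)))"
    using n by (simp add: step_def S_def s_def map_pmf_def)
  have "(0, 1) \<in> S" using n by (auto simp: S_def)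
  moreover have "finite S" by (rule finite_subset[of _ "{..<nagents c} \<times> {..<nagents c}"]) (auto simp: S_def)
  moreover have "finite (set_pmf (interact p x y))" for x y by (simp add: interact_def)
  ultimately have "(\<integral>y. g y \<partial>step p c) = (\<Sum>(i,j)\<in>S. h (s i) (s j) / real (card S))"
    unfolding step
    by (subst pmf_expectation_bind_pmf_of_set)
       (auto simp: h_def divide_inverse split: prod.splits intro!: sum.cong)
  also have "\<dots> = (\<Sum>(i,j)\<in>S. h (s i) (s j)) / real (card S)"
    by (simp add: sum_divide_distrib case_prod_unfold)
  also have "(\<Sum>(i,j)\<in>S. h (s i) (s j))
     = real a * (real a - 1) * h Op1 Op1 + real a * real b * h Op1 Op2 + real a * real u * h Op1 Und
     + real b * real a * h Op2 Op1 + real b * (real b - 1) * h Op2 Op2 + real b * real u * h Op2 Und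
     + real u * real a * h Und Op1 + real u * real b * h Und Op2 + real u * (real u - 1) * h Und Und"
    unfolding S_def nc unfolding s_def c by (rule sum_agent_pairs)
  also have "\<dots> = trans_sum p g c"
  proof -
    have h_vals: "h Op1 Op1 = g (a-1+1,b,u)" "h Op1 Op2 = p * g (a-1+1,b,u) + (1-p) * g (a-1,b,u+1)"
      "h Op1 Und = g (a-1+1,b,u)" "h Op2 Op1 = g (a,b-1,u+1)" "h Op2 Op2 = g (a,b-1+1,u)"
      "h Op2 Und = g (a,b-1+1,u)" "h Und Op1 = g (a+1,b,u-1)" "h Und Op2 = g (a,b+1,u-1)"
      "h Und Und = g (a,b,u-1+1)"
      using p by (simp_all add: h_def interact_def c move_simps del: One_nat_def)
    \<comment> \<open>a - 1 + 1 differs from a only if a = 0, where its weight vanishes; likewise b, u\<close>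
    show ?thesis unfolding h_vals c by (cases a; cases b; cases u) (simp_all add: algebra_simps)
  qed
  also have "real (card S) = real (nagents c) * (real (nagents c) - 1)"
    using sum_agent_pairs[where a = a and b = b and u = u and F = "\<lambda>_ _. 1"]
    unfolding S_def nc by (simp add: algebra_simps)
  finally show ?thesis .
qed

definition cfgs :: "nat \<Rightarrow> config set" where
  "cfgs n = {c. nagents c = n}"

lemma mem_cfgs [simp]: "(a,b,u) \<in> cfgs n \<longleftrightarrow> a + b + u = n"
  by (simp add: cfgs_def nagents_def)

fun cfg_le :: "config \<Rightarrow> config \<Rightarrow> bool" where
  "cfg_le (a,b,u) (a',b',u') \<longleftrightarrow> a \<le> a' \<and> b' \<le> b"

lemma monotone_cfgsD:
  fixes g :: "config \<Rightarrow> real"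
  assumes "monotone_on (cfgs n) cfg_le (\<le>) g"
    and "a + b + u = n" "a' + b' + u' = n" "a \<le> a'" "b' \<le> b"
  shows "0 \<le> g (a',b',u') - g (a,b,u)"
  using monotone_onD[OF assms(1), of "(a,b,u)" "(a',b',u')"] assms(2-) by simp

lemma monotone_on_cfgsI:
  fixes F :: "config \<Rightarrow> 'a::preorder"
  assumes und_to_op1: "\<And>a b u. a + b + Suc u = n \<Longrightarrow> F (a,b,Suc u) \<le> F (Suc a,b,u)"
    and op2_to_und: "\<And>a b u. a + Suc b + u = n \<Longrightarrow> F (a,Suc b,u) \<le> F (a,b,Suc u)"
  shows "monotone_on (cfgs n) cfg_le (\<le>) F"
proof (rule monotone_onI)
  have op2_to_und_iter: "F (a,b+k,u) \<le> F (a,b,u+k)" if "a + b + k + u = n" for a b k u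
    using that
  proof (induction k arbitrary: u)
    case (Suc k)
    have "F (a,Suc (b+k),u) \<le> F (a,b+k,Suc u)" by (rule op2_to_und) (use Suc.prems in simp)
    also have "\<dots> \<le> F (a,b,Suc u+k)" by (rule Suc.IH) (use Suc.prems in simp)
    finally show ?case by simp
  qed simp
  have und_to_op1_iter: "F (a,b,u+k) \<le> F (a+k,b,u)" if "a + b + u + k = n" for a b k u
    using that
  proof (induction k arbitrary: a)
    case (Suc k)
    have "F (a,b,Suc (u+k)) \<le> F (Suc a,b,u+k)" by (rule und_to_op1) (use Suc.prems in simp)
    also have "\<dots> \<le> F (Suc a+k,b,u)" by (rule Suc.IH) (use Suc.prems in simp)
    finally show ?case by simp
  qed simp
  fix c c' assume "c \<in> cfgs n" "c' \<in> cfgs n" "cfg_le c c'"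
  then obtain a b u a' b' u' where c: "c = (a,b,u)" "c' = (a',b',u')"
    and sums: "a + b + u = n" "a' + b' + u' = n" and le: "a \<le> a'" "b' \<le> b"
    by (cases c; cases c') auto
  have "F (a,b'+(b-b'),u) \<le> F (a,b',u+(b-b'))"
    by (rule op2_to_und_iter) (use sums le in simp)
  also have "u + (b-b') = u' + (a'-a)" using sums le by simp
  also have "F (a,b',u'+(a'-a)) \<le> F (a+(a'-a),b',u')"
    by (rule und_to_op1_iter) (use sums le in simp)
  finally show "F c \<le> F c'" using le by (simp add: c)
qed

lemma trans_sum_nonneg:
  assumes h: "\<And>c. c \<in> cfgs n \<Longrightarrow> 0 \<le> h c" and c: "c \<in> cfgs n" and p: "0 \<le> p" "p \<le> 1"
  shows "0 \<le> trans_sum p h c"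
proof -
  obtain a b u where "c = (a,b,u)" "a + b + u = n" using c by (cases c) auto
  then show ?thesis using p
    by (cases "a = 0"; cases "b = 0"; cases "u = 0")
       (auto intro!: add_nonneg_nonneg mult_nonneg_nonneg h)
qed

lemma trans_sum_mono:
  assumes "\<And>c. c \<in> cfgs n \<Longrightarrow> g c \<le> g' c" "c \<in> cfgs n" "0 \<le> p" "p \<le> 1"
  shows "trans_sum p g c \<le> trans_sum p g' c"
proof -
  have "trans_sum p g' c - trans_sum p g c = trans_sum p (\<lambda>x. g' x - g x) c"
    by (cases c) (simp add: algebra_simps)
  moreover have "0 \<le> trans_sum p (\<lambda>x. g' x - g x) c"
    by (rule trans_sum_nonneg) (use assms in auto)
  ultimately show ?thesis by simp
qed

lemma trans_sum_mono_stubbornness: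
  assumes m: "monotone_on (cfgs n) cfg_le (\<le>) g" and "c \<in> cfgs n" "q \<le> p"
  shows "trans_sum q g c \<le> trans_sum p g c"
proof -
  obtain a b u where c: "c = (a,b,u)" "a + b + u = n" using assms by (cases c) auto
  have "trans_sum p g c - trans_sum q g c = real a * real b * (p - q) * (g (a,b,u) - g (a-1,b,u+1))"
    by (simp add: c algebra_simps)
  moreover have "0 \<le> real a * real b * (p - q) * (g (a,b,u) - g (a-1,b,u+1))"
    using assms c by (cases "a = 0") (auto intro!: mult_nonneg_nonneg monotone_cfgsD[OF m])
  ultimately show ?thesis by simp
qed

lemma trans_sum_und_to_op1:
  assumes m: "monotone_on (cfgs (a + b + Suc v)) cfg_le (\<le>) g" and p: "0 \<le> p" "p \<le> 1"
  shows "trans_sum p g (a,b,Suc v) \<le> trans_sum p g (Suc a,b,v)"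
proof -
  define R where "R = real a * (real a - 1) + real a * real v + real a
     + real b * (real b - 1 + real v) + real v * real v + real a * real b * p"
  have "0 \<le> R"
    unfolding R_def using p by (cases a; cases b) (auto intro!: add_nonneg_nonneg)
  have "trans_sum p g (Suc a,b,v) - trans_sum p g (a,b,Suc v) =
      real a * real b * (1-p) * (g (a,b,v+1) - g (a-1,b,v+2))
    + real a * real b * (g (a+1,b-1,v+1) - g (a,b-1,v+2))
    + real v * real a * (g (a+2,b,v-1) - g (a+1,b,v))
    + real v * real b * (g (a+1,b+1,v-1) - g (a,b+1,v))
    + real b * (1-p) * (g (a,b,v+1) - g (a,b+1,v))
    + real b * p * (g (a+1,b,v) - g (a,b+1,v))
    + real v * (g (a+2,b,v-1) - g (a,b,v+1))
    + real b * (g (a+1,b-1,v+1) - g (a,b,v+1))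
    + R * (g (a+1,b,v) - g (a,b,v+1))"
    by (simp add: R_def algebra_simps numeral_2_eq_2)
  moreover have "0 \<le> \<dots>"
    using p \<open>0 \<le> R\<close>
    by (cases "a = 0"; cases "b = 0"; cases "v = 0")
       (auto intro!: add_nonneg_nonneg mult_nonneg_nonneg monotone_cfgsD[OF m])
  ultimately show ?thesis by linarith
qed

lemma trans_sum_op2_to_und:
  assumes m: "monotone_on (cfgs (a + Suc w + u)) cfg_le (\<le>) g" and p: "0 \<le> p" "p \<le> 1"
  shows "trans_sum p g (a,Suc w,u) \<le> trans_sum p g (a,w,Suc u)"
proof -
  define R where "R = real a * (real a - 1) + real a * real u
     + real w * (real w - 1) + real w * (real u + 1) + (real u + 1) * real u + real a * real w * p"
  have "0 \<le> R"
    unfolding R_def using p by (cases a; cases w) (auto intro!: add_nonneg_nonneg)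
  have "trans_sum p g (a,w,Suc u) - trans_sum p g (a,Suc w,u) =
      real a * real w * (1-p) * (g (a-1,w,u+2) - g (a-1,w+1,u+1))
    + real a * real w * (g (a,w-1,u+2) - g (a,w,u+1))
    + real u * real a * (g (a+1,w,u) - g (a+1,w+1,u-1))
    + real u * real w * (g (a,w+1,u) - g (a,w+2,u-1))
    + real a * (1-p) * (g (a,w+1,u) - g (a-1,w+1,u+1))
    + real u * (g (a,w+1,u) - g (a,w+2,u-1))
    + real a * (g (a+1,w,u) - g (a,w+1,u))
    + R * (g (a,w,u+1) - g (a,w+1,u))"
    by (simp add: R_def algebra_simps numeral_2_eq_2)
  moreover have "0 \<le> \<dots>"
    using p \<open>0 \<le> R\<close>
    by (cases "a = 0"; cases "w = 0"; cases "u = 0")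
       (auto intro!: add_nonneg_nonneg mult_nonneg_nonneg monotone_cfgsD[OF m])
  ultimately show ?thesis by linarith
qed

lemma monotone_trans_sum:
  assumes "monotone_on (cfgs n) cfg_le (\<le>) g" "0 \<le> p" "p \<le> 1"
  shows "monotone_on (cfgs n) cfg_le (\<le>) (trans_sum p g)"
proof (rule monotone_on_cfgsI)
  fix a b u
  assume "a + b + Suc u = n"
  then show "trans_sum p g (a,b,Suc u) \<le> trans_sum p g (Suc a,b,u)"
    using trans_sum_und_to_op1[of a b u g p] assms by simp
next
  fix a b u
  assume "a + Suc b + u = n"
  then show "trans_sum p g (a,Suc b,u) \<le> trans_sum p g (a,b,Suc u)"
    using trans_sum_op2_to_und[of a b u g p] assms by simp
qed

lemma cfg_le_consensus_1: "cfg_le (consensus 1 n) c \<Longrightarrow> c \<in> cfgs n \<Longrightarrow> c = consensus 1 n"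
  by (cases c) (auto simp: consensus_def)

lemma cfg_le_consensus_2: "cfg_le c (consensus 2 n) \<Longrightarrow> c \<in> cfgs n \<Longrightarrow> c = consensus 2 n"
  by (cases c) (auto simp: consensus_def)

lemma expectation_step_mono:
  fixes g g' :: "config \<Rightarrow> real"
  assumes mono: "monotone_on (cfgs n) cfg_le (\<le>) g'" and le: "\<And>c. c \<in> cfgs n \<Longrightarrow> g c \<le> g' c"
    and p: "0 \<le> q" "q \<le> p" "p \<le> 1" and c: "c \<in> cfgs n" "c' \<in> cfgs n" "cfg_le c c'"
  shows "(\<integral>y. g y \<partial>step q c) \<le> (\<integral>y. g' y \<partial>step p c')"
proof (cases "n < 2")
  case True
  then have "step q c = return_pmf c" "step p c' = return_pmf c'"
    using c by (simp_all add: step_def cfgs_def)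
  then show ?thesis using order_trans[OF le[OF c(1)] monotone_onD[OF mono c]] by simp
next
  case False
  then have N: "0 < real n * (real n - 1)" by simp
  have "trans_sum q g c \<le> trans_sum q g' c" by (rule trans_sum_mono) (use le c p in auto)
  also have "\<dots> \<le> trans_sum p g' c" by (rule trans_sum_mono_stubbornness) (use mono c p in auto)
  also have "\<dots> \<le> trans_sum p g' c'" by (rule monotone_onD[OF monotone_trans_sum[OF mono]]) (use c p in auto)
  finally show ?thesis
    using False c p by (simp add: expectation_step cfgs_def divide_right_mono N[THEN less_imp_le])
qed

lemma hit_prob_1_mono:
  assumes "0 \<le> q" "q \<le> p" "p \<le> 1" "c \<in> cfgs n" "c' \<in> cfgs n" "cfg_le c c'"
  shows "hit_prob 1 q n c t \<le> hit_prob 1 p n c' t"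
  using assms
proof (induction t arbitrary: q p c c')
  case 0
  then show ?case using cfg_le_consensus_1[of n c'] by (auto simp: hit_prob_0)
next
  case (Suc t)
  show ?case
  proof (cases "c' = consensus 1 n")
    case True
    then show ?thesis by (simp add: hit_prob_consensus hit_prob_le_1)
  next
    case False
    then have "c \<noteq> consensus 1 n" using Suc.prems cfg_le_consensus_1 by blast
    moreover have "(\<integral>y. hit_prob 1 q n y t \<partial>step q c) \<le> (\<integral>y. hit_prob 1 p n y t \<partial>step p c')"
      by (rule expectation_step_mono[where n = n])
         (use Suc in \<open>auto intro: monotone_onI\<close>)
    ultimately show ?thesis using False by (simp add: hit_prob_Suc)
  qed
qed

lemma hit_prob_2_antimono:
  assumes "0 \<le> p" "p \<le> q" "q \<le> 1" "c \<in> cfgs n" "c' \<in> cfgs n" "cfg_le c c'"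
  shows "hit_prob 2 q n c' t \<le> hit_prob 2 p n c t"
  using assms
proof (induction t arbitrary: q p c c')
  case 0
  then show ?case using cfg_le_consensus_2[of c n] by (auto simp: hit_prob_0)
next
  case (Suc t)
  show ?case
  proof (cases "c = consensus 2 n")
    case True
    then show ?thesis by (simp add: hit_prob_consensus hit_prob_le_1)
  next
    case False
    then have "c' \<noteq> consensus 2 n" using Suc.prems cfg_le_consensus_2 by blast
    moreover have "(\<integral>y. - hit_prob 2 p n y t \<partial>step p c) \<le> (\<integral>y. - hit_prob 2 q n y t \<partial>step q c')"
      by (rule expectation_step_mono[where n = n])
         (use Suc in \<open>auto intro: monotone_onI\<close>)
    ultimately show ?thesis using False by (simp add: hit_prob_Suc)
  qed
qed

theorem theorem2:
  fixes p pt :: real and n x1 x2 u xt1 xt2 ut t :: nat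
  assumes "0 \<le> p" "p \<le> 1" "0 \<le> pt" "pt \<le> 1"
    and "x1 + x2 + u = n" and "xt1 + xt2 + ut = n"
  shows "(pt \<le> p \<and> xt1 \<le> x1 \<and> xt2 \<ge> x2 \<longrightarrow>
            prob_T_le 1 p (x1, x2, u) t \<ge> prob_T_le 1 pt (xt1, xt2, ut) t)
       \<and> (pt \<ge> p \<and> xt1 \<ge> x1 \<and> xt2 \<le> x2 \<longrightarrow>
            prob_T_le 2 p (x1, x2, u) t \<ge> prob_T_le 2 pt (xt1, xt2, ut) t)"
proof -
  have "prob_T_le i q c t = hit_prob i q n c t" if "c \<in> cfgs n" for i q c
    using that by (simp add: prob_T_le_def hit_prob_def cfgs_def)
  then show ?thesis
    using assms hit_prob_1_mono[of pt p "(xt1, xt2, ut)" n "(x1, x2, u)" t]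
      hit_prob_2_antimono[of p pt "(x1, x2, u)" n "(xt1, xt2, ut)" t]
    by auto
qed

end
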